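(* Let $p$ be a prime and $n,d$ positive integers. For any $k\geq\lceil\frac{d+1}{p-1}\rceil$, if $h:\mathbb{F}_p^k\to\mathbb{F}_p$ satisfies $\deg(h)=k(p-1)-(d+1)$, then $h$ is a local characterization for $\mathrm{RM}[n,p,d]$, i.e. $\mathrm{RM}[n,p,d]=\mathcal{F}_n(h)$.
   Context: Functions $\mathbb{F}_q^m\to\mathbb{F}_q$ are identified with their unique polynomial representations with individual degrees in $\{0,\dots,q-1\}$; the degree is the maximal total degree of a monomial with nonzero coefficient. $\mathrm{RM}[n,q,d]$ is the set of functions $\mathbb{F}_q^n\to\mathbb{F}_q$ of degree at most $d$. For $f,g:\mathbb{F}_q^k\to\mathbb{F}_q$, $\langle f,g\rangle=\sum_{\alpha\in\mathbb{F}_q^k}f(\alpha)g(\alpha)\in\mathbb{F}_q$. Let $\mathcal{T}_{n,k}$ be the set of affine maps $T:\mathbb{F}_q^k\to\mathbb{F}_q^n$, and for $f:\mathbb{F}_q^n\to\mathbb{F}_q$ let $f\circ T:\mathbb{F}_q^k\to\mathbb{F}_q$, $x\mapsto f(T(x))$. For $h:\mathbb{F}_q^k\to\mathbb{F}_q$, $\mathcal{F}_n(h)=\{f:\mathbb{F}_q^n\to\mathbb{F}_q : \langle f\circ T,h\rangle=0 \text{ for all } T\in\mathcal{T}_{n,k}\}$, and $h$ is called a local characterization for $\mathcal{F}_n(h)$. *)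

theory Defs
  imports Complex_Main "HOL-Computational_Algebra.Primes" "HOL-Library.Cardinality"
begin

text \<open>The field F_q is modelled by a finite field type 'a (q = CARD('a)).
  Points of F_q^n are functions nat => 'a vanishing at indices >= n.\<close>

definition vecs :: "nat \<Rightarrow> (nat \<Rightarrow> 'a::zero) set" where
  "vecs n = {x. \<forall>i\<ge>n. x i = 0}"

definition funs :: "nat \<Rightarrow> ((nat \<Rightarrow> 'a::zero) \<Rightarrow> 'a) set" where
  "funs n = {f. \<forall>x. x \<notin> vecs n \<longrightarrow> f x = 0}"

definition exps :: "'a::finite itself \<Rightarrow> nat \<Rightarrow> (nat \<Rightarrow> nat) set" where
  "exps (t::'a itself) n = {e. (\<forall>i<n. e i < CARD('a)) \<and> (\<forall>i\<ge>n. e i = 0)}"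

definition monom :: "nat \<Rightarrow> (nat \<Rightarrow> nat) \<Rightarrow> (nat \<Rightarrow> 'a::comm_ring_1) \<Rightarrow> 'a" where
  "monom n e x = (\<Prod>i<n. x i ^ e i)"

text \<open>deg f <= D: the reduced polynomial of f only has monomials of total degree <= D
  (for D < 0 this means f = 0).\<close>
definition deg_le :: "nat \<Rightarrow> ((nat \<Rightarrow> 'a::{finite,field}) \<Rightarrow> 'a) \<Rightarrow> int \<Rightarrow> bool" where
  "deg_le n f D = (\<exists>c :: (nat \<Rightarrow> nat) \<Rightarrow> 'a. \<forall>x\<in>vecs n.
      f x = (\<Sum>e\<in>{e\<in>exps TYPE('a) n. int (\<Sum>i<n. e i) \<le> D}. c e * monom n e x))"

definition has_degree :: "nat \<Rightarrow> ((nat \<Rightarrow> 'a::{finite,field}) \<Rightarrow> 'a) \<Rightarrow> int \<Rightarrow> bool" where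
  "has_degree n f D = (deg_le n f D \<and> \<not> deg_le n f (D - 1))"

definition RM :: "nat \<Rightarrow> nat \<Rightarrow> ((nat \<Rightarrow> 'a::{finite,field}) \<Rightarrow> 'a) set" where
  "RM n d = {f \<in> funs n. deg_le n f (int d)}"

definition inner_prod :: "nat \<Rightarrow> ((nat \<Rightarrow> 'a::{finite,field}) \<Rightarrow> 'a) \<Rightarrow> ((nat \<Rightarrow> 'a) \<Rightarrow> 'a) \<Rightarrow> 'a" where
  "inner_prod k f g = (\<Sum>\<alpha>\<in>vecs k. f \<alpha> * g \<alpha>)"

definition affine_maps :: "nat \<Rightarrow> nat \<Rightarrow> ((nat \<Rightarrow> 'a::comm_ring_1) \<Rightarrow> (nat \<Rightarrow> 'a)) set" where
  "affine_maps k n = {T. \<exists>A b. \<forall>x. T x =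
      (\<lambda>i. if i < n then (\<Sum>j<k. A i j * x j) + b i else 0)}"

definition Fchar :: "nat \<Rightarrow> nat \<Rightarrow> ((nat \<Rightarrow> 'a::{finite,field}) \<Rightarrow> 'a) \<Rightarrow> ((nat \<Rightarrow> 'a) \<Rightarrow> 'a) set" where
  "Fchar n k h = {f \<in> funs n. \<forall>T\<in>affine_maps k n. inner_prod k (f \<circ> T) h = 0}"

end

theory Submission
  imports "HOL-Computational_Algebra.Polynomial" "HOL-Library.FuncSet" Defs
begin

text \<open>
  For \<open>f\<close> of degree at most \<open>d\<close> and an affine map \<open>T\<close>, the product \<open>(f \<circ> T) h\<close> has
  degree at most \<open>d + deg h < k (q - 1)\<close>, and every such polynomial sums to zero over
  \<open>F\<^sub>q\<^sup>k\<close> because \<open>\<Sum>\<^sub>t t\<^sup>s = 0\<close> for \<open>s < q - 1\<close>. Hence \<open>RM[n,q,d] \<subseteq> F\<^sub>n(h)\<close>.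

  Conversely, \<open>F\<^sub>n(h)\<close> is closed under linear combinations and affine substitutions. If
  \<open>f \<in> F\<^sub>n(h)\<close> had a monomial \<open>x\<^sup>m\<close> of degree \<open>> d\<close>, averaging \<open>f\<close> over rescalings of the
  coordinates would isolate \<open>x\<^sup>m \<in> F\<^sub>n(h)\<close>. Substituting \<open>x\<^sub>j + l x\<^sub>N\<close> for \<open>x\<^sub>j\<close> and
  extracting the coefficient \<open>m\<^sub>j\<close> of \<open>l\<close>, which is nonzero as \<open>m\<^sub>j < p\<close>, splits it into a
  squarefree monomial of the same degree; identifying variables and setting others to \<open>1\<close>
  then gives every monomial \<open>x\<^sup>b\<close> in \<open>k\<close> variables of degree \<open>\<le> |m|\<close>. Taking
  \<open>b\<^sub>i = q - 1 - a\<^sub>i\<close> for a monomial \<open>x\<^sup>a\<close> of top degree in \<open>h\<close> gives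
  \<open>\<langle>x\<^sup>b, h\<rangle> = \<plusminus>h\<^sub>a \<noteq> 0\<close>, contradicting \<open>x\<^sup>b \<in> F\<^sub>k(h)\<close>.
\<close>

section \<open>Power sums and points of a finite field\<close>

lemma of_nat_card_eq_0: "of_nat CARD('a::{finite,ring_1}) = (0::'a)"
proof -
  have "(\<Sum>x::'a\<in>UNIV. x + 1) = (\<Sum>x\<in>UNIV. x)"
    by (rule sum.reindex_bij_witness[of _ "\<lambda>x. x - 1" "\<lambda>x. x + 1"]) auto
  thus ?thesis by (simp add: sum.distrib)
qed

lemma of_nat_neq_0_less_card:
  assumes "prime CARD('a::{finite,field})" "0 < t" "t < CARD('a)"
  shows "of_nat t \<noteq> (0::'a)"
proof -
  have "CHAR('a) dvd CARD('a)"
    by (simp add: of_nat_card_eq_0 flip: of_nat_eq_0_iff_char_dvd)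
  hence "CHAR('a) = CARD('a)"
    using assms(1) CHAR_not_1[where 'a='a] by (auto simp: prime_nat_iff)
  thus ?thesis using assms(2,3) by (auto simp: of_nat_eq_0_iff_char_dvd dest: dvd_imp_le)
qed

lemma card_field_ge_2: "CARD('a::{finite,field}) \<ge> 2"
  using card_mono[of UNIV "{0, 1::'a}"] by simp

lemma power_card_minus_1_eq_1:
  assumes "(x::'a::{finite,field}) \<noteq> 0"
  shows "x ^ (CARD('a) - 1) = 1"
proof -
  let ?U = "UNIV - {0::'a}"
  have "(\<Prod>y\<in>?U. y) = (\<Prod>y\<in>?U. x * y)"
    by (rule prod.reindex_bij_witness[of _ "\<lambda>y. x * y" "\<lambda>y. y / x"]) (use assms in simp_all)
  also have "\<dots> = x ^ card ?U * (\<Prod>y\<in>?U. y)" by (simp add: prod.distrib)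
  finally have "x ^ card ?U = 1" by simp
  thus ?thesis by (simp add: card_Diff_singleton)
qed

lemma exists_power_neq_1:
  assumes "0 < r" "r < CARD('a) - 1"
  obtains y :: "'a::{finite,field}" where "y \<noteq> 0" "y ^ r \<noteq> 1"
proof -
  define P :: "'a poly" where "P = Polynomial.monom 1 r + [:-1:]"
  have "degree P = r"
    unfolding P_def using assms(1) by (subst degree_add_eq_left) (simp_all add: degree_monom_eq)
  hence "card {y. poly P y = 0} \<le> r"
    using assms(1) card_poly_roots_bound[of P] by fastforce
  hence "\<not> UNIV - {0} \<subseteq> {y. poly P y = 0}"
    using assms(2) card_mono[of "{y. poly P y = 0}" "UNIV - {0}"] by (auto simp: card_Diff_singleton)
  thus ?thesis using that by (auto simp: P_def poly_monom)
qed

lemma sum_UNIV_power: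
  "(\<Sum>x::'a::{finite,field}\<in>UNIV. x ^ t) = (if t \<noteq> 0 \<and> (CARD('a) - 1) dvd t then -1 else 0)"
proof -
  let ?q = "CARD('a) - 1"
  have q: "?q > 0" using card_field_ge_2[where 'a='a] by simp
  consider "t = 0" | "t \<noteq> 0" "?q dvd t" | "\<not> ?q dvd t" by blast
  thus ?thesis
  proof cases
    case 1
    thus ?thesis by (simp add: of_nat_card_eq_0)
  next
    case 2
    hence "x ^ t = 1" if "x \<noteq> 0" for x :: 'a
      using power_card_minus_1_eq_1[OF that] by (auto simp: power_mult elim!: dvdE)
    hence "(\<Sum>x::'a\<in>UNIV. x ^ t) = 0 ^ t + of_nat ?q"
      by (simp add: sum.remove[of UNIV 0] card_Diff_singleton)
    also have "\<dots> = -1"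
      using 2 q by (simp add: of_nat_diff of_nat_card_eq_0)
    finally show ?thesis using 2 by simp
  next
    case 3
    define r where "r = t mod ?q"
    have "0 < r" "r < ?q" using 3 q by (simp_all add: r_def mod_eq_0_iff_dvd[symmetric])
    then obtain y :: 'a where y: "y \<noteq> 0" "y ^ r \<noteq> 1" by (rule exists_power_neq_1)
    have "y ^ t = (y ^ ?q) ^ (t div ?q) * y ^ r"
      by (simp add: r_def power_mult[symmetric] power_add[symmetric])
    hence yt: "y ^ t \<noteq> 1" using y power_card_minus_1_eq_1[OF y(1)] by simp
    have "(\<Sum>x::'a\<in>UNIV. x ^ t) = (\<Sum>x\<in>UNIV. (y * x) ^ t)"
      by (rule sum.reindex_bij_witness[of _ "\<lambda>x. y * x" "\<lambda>x. x / y"]) (use y in simp_all)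
    also have "\<dots> = y ^ t * (\<Sum>x\<in>UNIV. x ^ t)"
      by (simp add: power_mult_distrib sum_distrib_left)
    finally have "(1 - y ^ t) * (\<Sum>x::'a\<in>UNIV. x ^ t) = 0" by (simp add: algebra_simps)
    thus ?thesis using yt 3 by simp
  qed
qed

lemma sum_UNIV_power_eq_0:
  "t < CARD('a::{finite,field}) - 1 \<Longrightarrow> (\<Sum>x::'a\<in>UNIV. x ^ t) = 0"
  by (auto simp: sum_UNIV_power dest: dvd_imp_le)

lemma bij_betw_restrict_lessThan:
  fixes n :: nat
  assumes "\<And>x. x \<in> X \<longleftrightarrow> (\<forall>i<n. x i \<in> A) \<and> (\<forall>i\<ge>n. x i = 0)"
  shows "bij_betw (\<lambda>x. restrict x {..<n}) X (PiE {..<n} (\<lambda>_. A))"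
proof (rule bij_betw_byWitness[of X "\<lambda>y i. if i < n then y i else 0"])
  show "\<forall>x\<in>X. (\<lambda>i. if i < n then restrict x {..<n} i else 0) = x"
  proof
    fix x assume "x \<in> X"
    hence "\<forall>i\<ge>n. x i = 0" using assms by blast
    thus "(\<lambda>i. if i < n then restrict x {..<n} i else 0) = x" by (auto simp: fun_eq_iff not_less)
  qed
  show "\<forall>y\<in>PiE {..<n} (\<lambda>_. A). restrict (\<lambda>i. if i < n then y i else 0) {..<n} = y"
    by (auto simp: fun_eq_iff PiE_def extensional_def)
  show "(\<lambda>x. restrict x {..<n}) ` X \<subseteq> PiE {..<n} (\<lambda>_. A)"
    using assms by (intro image_subsetI) (simp add: Pi_iff)
  show "(\<lambda>y i. if i < n then y i else 0) ` PiE {..<n} (\<lambda>_. A) \<subseteq> X"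
    using assms by auto
qed

lemma bij_betw_restrict_vecs:
  "bij_betw (\<lambda>x. restrict x {..<n}) (vecs n) (PiE {..<n} (\<lambda>_. UNIV))"
  by (rule bij_betw_restrict_lessThan[where A=UNIV]) (simp add: vecs_def)

lemma bij_betw_restrict_exps:
  "bij_betw (\<lambda>x. restrict x {..<n}) (exps TYPE('a::finite) n) (PiE {..<n} (\<lambda>_. {..<CARD('a)}))"
  by (rule bij_betw_restrict_lessThan) (auto simp: exps_def)

lemma finite_vecs: "finite (vecs n :: (nat \<Rightarrow> 'a::{finite,zero}) set)"
  by (simp add: bij_betw_finite[OF bij_betw_restrict_vecs] finite_PiE)

lemma card_vecs: "card (vecs n :: (nat \<Rightarrow> 'a::{finite,zero}) set) = CARD('a) ^ n"
  using bij_betw_same_card[OF bij_betw_restrict_vecs] by (simp add: card_PiE)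

lemma finite_exps: "finite (exps TYPE('a::finite) n)"
  by (simp add: bij_betw_finite[OF bij_betw_restrict_exps] finite_PiE)

lemma card_exps: "card (exps TYPE('a::finite) n) = CARD('a) ^ n"
  using bij_betw_same_card[OF bij_betw_restrict_exps] by (simp add: card_PiE)

lemma sum_vecs_prod:
  fixes \<phi> :: "nat \<Rightarrow> 'a::{finite,zero} \<Rightarrow> 'b::comm_semiring_1"
  shows "(\<Sum>x\<in>vecs n. \<Prod>i<n. \<phi> i (x i)) = (\<Prod>i<n. \<Sum>t\<in>UNIV. \<phi> i t)"
proof -
  have "(\<Prod>i<n. \<Sum>t\<in>UNIV. \<phi> i t) = (\<Sum>y\<in>PiE {..<n} (\<lambda>_. UNIV). \<Prod>i<n. \<phi> i (y i))"
    by (rule prod_sum_PiE) simp_all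
  also have "\<dots> = (\<Sum>x\<in>vecs n. \<Prod>i<n. \<phi> i (restrict x {..<n} i))"
    by (rule sum.reindex_bij_betw[OF bij_betw_restrict_vecs, symmetric])
  finally show ?thesis by simp
qed

lemma sum_vecs_monom:
  "(\<Sum>x\<in>vecs n. monom n e x) = (\<Prod>i<n. \<Sum>t::'a::{finite,comm_ring_1}\<in>UNIV. t ^ e i)"
  unfolding monom_def by (rule sum_vecs_prod)

section \<open>Polynomial functions of bounded degree\<close>

lemma monom_add: "monom k (\<lambda>i. e i + e' i) x = monom k e x * monom k e' x"
  by (simp add: monom_def power_add prod.distrib)

text \<open>Unlike \<open>deg_le\<close>, exponents are not reduced below \<open>q\<close>, so this notion is closed
  under products and affine substitutions.\<close>
inductive poly_deg_le :: "nat \<Rightarrow> nat \<Rightarrow> ((nat \<Rightarrow> 'a::comm_ring_1) \<Rightarrow> 'a) \<Rightarrow> bool"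
  for k D where
  zero: "poly_deg_le k D (\<lambda>_. 0)"
| add_monom: "(\<Sum>i<k. e i) \<le> D \<Longrightarrow> poly_deg_le k D g \<Longrightarrow>
    poly_deg_le k D (\<lambda>x. c * monom k e x + g x)"

lemma poly_deg_le_monom: "(\<Sum>i<k. e i) \<le> D \<Longrightarrow> poly_deg_le k D (\<lambda>x. c * monom k e x)"
  using poly_deg_le.add_monom[OF _ poly_deg_le.zero] by simp

lemma poly_deg_le_const: "poly_deg_le k D (\<lambda>_. c)"
  using poly_deg_le_monom[where e="\<lambda>_. 0" and c=c] by (simp add: monom_def)

lemma poly_deg_le_var:
  assumes "i < k"
  shows "poly_deg_le k 1 (\<lambda>x. x i)"
proof -
  have eq: "monom k (\<lambda>j. if j = i then 1 else 0) = (\<lambda>x::nat \<Rightarrow> 'a. x i)"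
    using assms by (simp add: fun_eq_iff monom_def if_distrib[of "power _"] prod.delta cong: if_cong)
  have "poly_deg_le k 1 (\<lambda>x::nat \<Rightarrow> 'a. 1 * monom k (\<lambda>j. if j = i then 1 else 0) x)"
    by (rule poly_deg_le_monom) (use assms in \<open>simp add: sum.delta\<close>)
  thus ?thesis by (simp only: eq mult_1)
qed

lemma poly_deg_le_mono: "poly_deg_le k D g \<Longrightarrow> D \<le> D' \<Longrightarrow> poly_deg_le k D' g"
  by (induction rule: poly_deg_le.induct) (auto intro: poly_deg_le.intros)

lemma poly_deg_le_add:
  "poly_deg_le k D g \<Longrightarrow> poly_deg_le k D g' \<Longrightarrow> poly_deg_le k D (\<lambda>x. g x + g' x)"
proof (induction rule: poly_deg_le.induct)
  case (add_monom e g c)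
  thus ?case using poly_deg_le.add_monom[OF add_monom.hyps(1)] by (simp add: add.assoc)
qed simp

lemma poly_deg_le_cmult: "poly_deg_le k D g \<Longrightarrow> poly_deg_le k D (\<lambda>x. c * g x)"
proof (induction rule: poly_deg_le.induct)
  case (add_monom e g c')
  thus ?case using poly_deg_le.add_monom[OF add_monom.hyps(1), of _ "c * c'"]
    by (simp add: distrib_left mult.assoc)
qed (simp add: poly_deg_le.zero)

lemma poly_deg_le_sum:
  "finite I \<Longrightarrow> (\<And>i. i \<in> I \<Longrightarrow> poly_deg_le k D (g i)) \<Longrightarrow> poly_deg_le k D (\<lambda>x. \<Sum>i\<in>I. g i x)"
  by (induction I rule: finite_induct) (simp_all add: poly_deg_le.zero poly_deg_le_add)

lemma poly_deg_le_monom_mult: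
  "poly_deg_le k D g \<Longrightarrow> poly_deg_le k ((\<Sum>i<k. e i) + D) (\<lambda>x. monom k e x * g x)"
proof (induction rule: poly_deg_le.induct)
  case zero
  thus ?case by (simp add: poly_deg_le.zero)
next
  case (add_monom e' g c)
  have "poly_deg_le k ((\<Sum>i<k. e i) + D) (\<lambda>x. c * monom k (\<lambda>i. e i + e' i) x + monom k e x * g x)"
    using add_monom by (intro poly_deg_le.add_monom) (simp_all add: sum.distrib)
  thus ?case by (simp add: monom_add algebra_simps)
qed

lemma poly_deg_le_mult:
  "poly_deg_le k D g \<Longrightarrow> poly_deg_le k D' g' \<Longrightarrow> poly_deg_le k (D + D') (\<lambda>x. g x * g' x)"
proof (induction rule: poly_deg_le.induct)
  case zero
  thus ?case by (simp add: poly_deg_le.zero)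
next
  case (add_monom e g c)
  have "poly_deg_le k (D + D') (\<lambda>x. c * (monom k e x * g' x))"
    using add_monom by (intro poly_deg_le_cmult poly_deg_le_mono[OF poly_deg_le_monom_mult]) auto
  thus ?case using add_monom by (simp add: poly_deg_le_add distrib_right mult.assoc)
qed

lemma poly_deg_le_power: "poly_deg_le k D g \<Longrightarrow> poly_deg_le k (m * D) (\<lambda>x. g x ^ m)"
  by (induction m) (simp_all add: poly_deg_le_const poly_deg_le_mult)

lemma poly_deg_le_prod_power:
  fixes n :: nat
  shows "(\<And>j. j < n \<Longrightarrow> poly_deg_le k 1 (g j)) \<Longrightarrow>
    poly_deg_le k (\<Sum>j<n. e j) (\<lambda>x. \<Prod>j<n. g j x ^ e j)"
proof (induction n)
  case 0
  thus ?case by (simp add: poly_deg_le_const)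
next
  case (Suc n)
  thus ?case using poly_deg_le_mult[OF _ poly_deg_le_power[of k 1 "g n" "e n"]] by simp
qed

lemma sum_vecs_poly_deg_le_eq_0:
  fixes g :: "(nat \<Rightarrow> 'a::{finite,field}) \<Rightarrow> 'a"
  assumes "poly_deg_le k D g" "D < k * (CARD('a) - 1)"
  shows "(\<Sum>x\<in>vecs k. g x) = 0"
  using assms
proof (induction rule: poly_deg_le.induct)
  case (add_monom e g c)
  have "\<exists>i<k. e i < CARD('a) - 1"
  proof (rule ccontr)
    assume "\<not> ?thesis"
    hence "CARD('a) - 1 \<le> e i" if "i < k" for i
      using that not_less by blast
    hence "(\<Sum>i<k. CARD('a) - 1) \<le> (\<Sum>i<k. e i)"
      by (intro sum_mono) simp
    thus False using add_monom by simp
  qed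
  then obtain i where i: "i < k" "e i < CARD('a) - 1" by blast
  have "(\<Sum>x\<in>vecs k. monom k e (x :: nat \<Rightarrow> 'a)) = 0"
    unfolding sum_vecs_monom using i sum_UNIV_power_eq_0[OF i(2)] by (intro prod_zero) auto
  thus ?case using add_monom by (simp add: sum.distrib flip: sum_distrib_left)
qed simp

lemma affine_maps_in_vecs: "T \<in> affine_maps k n \<Longrightarrow> T x \<in> vecs n"
  unfolding affine_maps_def vecs_def by auto

lemma poly_deg_le_affine_coord:
  assumes "T \<in> affine_maps k n" "j < n"
  shows "poly_deg_le k 1 (\<lambda>x. T x j)"
proof -
  obtain A b where T: "\<And>x. T x = (\<lambda>i. if i < n then (\<Sum>l<k. A i l * x l) + b i else 0)"
    using assms(1) unfolding affine_maps_def by blast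
  have "poly_deg_le k 1 (\<lambda>x. (\<Sum>l<k. A j l * x l) + b j)"
    by (intro poly_deg_le_add poly_deg_le_sum poly_deg_le_cmult poly_deg_le_var poly_deg_le_const)
      simp_all
  thus ?thesis using assms(2) by (simp add: T)
qed

lemma poly_deg_le_comp_affine:
  assumes "poly_deg_le n D g" "T \<in> affine_maps k n"
  shows "poly_deg_le k D (g \<circ> T)"
  using assms(1)
proof (induction rule: poly_deg_le.induct)
  case zero
  thus ?case by (simp add: o_def poly_deg_le.zero)
next
  case (add_monom e g c)
  have "poly_deg_le k (\<Sum>j<n. e j) (\<lambda>x. monom n e (T x))"
    unfolding monom_def by (intro poly_deg_le_prod_power poly_deg_le_affine_coord[OF assms(2)])
  hence "poly_deg_le k D (\<lambda>x. c * monom n e (T x))"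
    using add_monom.hyps(1) by (intro poly_deg_le_cmult) (rule poly_deg_le_mono)
  thus ?case using add_monom.IH by (simp add: o_def poly_deg_le_add)
qed

lemma deg_le_imp_poly_deg_le:
  fixes f :: "(nat \<Rightarrow> 'a::{finite,field}) \<Rightarrow> 'a"
  assumes "deg_le n f (int D)"
  obtains g where "poly_deg_le n D g" "\<And>x. x \<in> vecs n \<Longrightarrow> f x = g x"
proof -
  obtain c where c: "\<And>x. x \<in> vecs n \<Longrightarrow>
      f x = (\<Sum>e\<in>{e\<in>exps TYPE('a) n. int (\<Sum>i<n. e i) \<le> int D}. c e * monom n e x)"
    using assms unfolding deg_le_def by blast
  have "poly_deg_le n D (\<lambda>x. \<Sum>e\<in>{e\<in>exps TYPE('a) n. int (\<Sum>i<n. e i) \<le> int D}. c e * monom n e x)"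
    by (intro poly_deg_le_sum poly_deg_le_monom) (auto simp: finite_exps simp flip: of_nat_sum)
  thus ?thesis using that c by blast
qed

lemma RM_subset_Fchar:
  fixes h :: "(nat \<Rightarrow> 'a::{finite,field}) \<Rightarrow> 'a"
  assumes "deg_le k h (int e)" "d + e < k * (CARD('a) - 1)"
  shows "RM n d \<subseteq> Fchar n k h"
proof
  fix f :: "(nat \<Rightarrow> 'a) \<Rightarrow> 'a" assume f: "f \<in> RM n d"
  obtain g where g: "poly_deg_le n d g" "\<And>x. x \<in> vecs n \<Longrightarrow> f x = g x"
    using f unfolding RM_def by (auto elim: deg_le_imp_poly_deg_le)
  obtain g' where g': "poly_deg_le k e g'" "\<And>x. x \<in> vecs k \<Longrightarrow> h x = g' x"
    using deg_le_imp_poly_deg_le[OF assms(1)] by blast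
  have "inner_prod k (f \<circ> T) h = 0" if T: "T \<in> affine_maps k n" for T
  proof -
    have "inner_prod k (f \<circ> T) h = (\<Sum>x\<in>vecs k. (g \<circ> T) x * g' x)"
      unfolding inner_prod_def using g(2) g'(2) affine_maps_in_vecs[OF T] by simp
    also have "\<dots> = 0"
      using poly_deg_le_mult[OF poly_deg_le_comp_affine[OF g(1) T] g'(1)] assms(2)
      by (rule sum_vecs_poly_deg_le_eq_0)
    finally show ?thesis .
  qed
  thus "f \<in> Fchar n k h" using f by (simp add: RM_def Fchar_def)
qed

section \<open>The local constraint\<close>

text \<open>\<open>locally_orth h k N g\<close> says \<open>g \<in> F\<^sub>N(h)\<close>, without the normalisation \<open>funs\<close>.\<close>
definition locally_orth ::
    "((nat \<Rightarrow> 'a::{finite,field}) \<Rightarrow> 'a) \<Rightarrow> nat \<Rightarrow> nat \<Rightarrow> ((nat \<Rightarrow> 'a) \<Rightarrow> 'a) \<Rightarrow> bool"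
  where "locally_orth h k N g \<longleftrightarrow> (\<forall>T\<in>affine_maps k N. inner_prod k (g \<circ> T) h = 0)"

lemma Fchar_eq: "Fchar n k h = {f \<in> funs n. locally_orth h k n f}"
  by (simp add: Fchar_def locally_orth_def)

lemma affine_mapsI: "(\<lambda>x i. if i < n then (\<Sum>j<k. A i j * x j) + b i else 0) \<in> affine_maps k n"
  unfolding affine_maps_def by blast

lemma affine_maps_comp:
  assumes S: "S \<in> affine_maps M N" and T: "T \<in> affine_maps k M"
  shows "S \<circ> T \<in> affine_maps k N"
proof -
  obtain A b where A: "\<And>x. S x = (\<lambda>i. if i < N then (\<Sum>j<M. A i j * x j) + b i else (0::'a))"
    using S unfolding affine_maps_def by blast
  obtain A' b' where A': "\<And>x. T x = (\<lambda>i. if i < M then (\<Sum>j<k. A' i j * x j) + b' i else (0::'a))"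
    using T unfolding affine_maps_def by blast
  have "(\<Sum>j<M. A i j * T x j) = (\<Sum>l<k. (\<Sum>j<M. A i j * A' j l) * x l) + (\<Sum>j<M. A i j * b' j)" for x i
    by (simp add: A' algebra_simps sum.distrib sum_distrib_left sum_distrib_right sum.swap[of _ "{..<M}"])
  hence "S \<circ> T = (\<lambda>x i. if i < N then (\<Sum>l<k. (\<Sum>j<M. A i j * A' j l) * x l)
      + ((\<Sum>j<M. A i j * b' j) + b i) else 0)"
    by (simp add: fun_eq_iff A add.assoc)
  thus ?thesis by (simp only: affine_mapsI)
qed

lemma locally_orth_cong:
  assumes "locally_orth h k N g" "\<And>x. x \<in> vecs N \<Longrightarrow> g x = g' x"
  shows "locally_orth h k N g'"
proof -
  have "g \<circ> T = g' \<circ> T" if "T \<in> affine_maps k N" for T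
    using assms(2) affine_maps_in_vecs[OF that] by auto
  thus ?thesis using assms(1) unfolding locally_orth_def by metis
qed

lemma locally_orth_comp_affine:
  "locally_orth h k N g \<Longrightarrow> S \<in> affine_maps M N \<Longrightarrow> locally_orth h k M (g \<circ> S)"
  unfolding locally_orth_def using affine_maps_comp by (metis comp_assoc)

lemma locally_orth_subst:
  assumes "locally_orth h k N g"
    and "\<And>x. x \<in> vecs M \<Longrightarrow> \<sigma> x = (\<lambda>i. if i < N then (\<Sum>j<M. A i j * x j) + b i else 0)"
  shows "locally_orth h k M (\<lambda>x. g (\<sigma> x))"
proof -
  from locally_orth_comp_affine[OF assms(1) affine_mapsI] show ?thesis
    by (rule locally_orth_cong) (simp add: assms(2))
qed

lemma locally_orth_sum:
  assumes "\<And>i. i \<in> I \<Longrightarrow> locally_orth h k N (g i)"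
  shows "locally_orth h k N (\<lambda>x. \<Sum>i\<in>I. g i x)"
proof -
  have "inner_prod k ((\<lambda>x. \<Sum>i\<in>I. g i x) \<circ> T) h = (\<Sum>i\<in>I. inner_prod k (g i \<circ> T) h)" for T
    unfolding inner_prod_def by (simp add: sum_distrib_right sum.swap[of _ I])
  thus ?thesis using assms unfolding locally_orth_def by simp
qed

lemma locally_orth_cmult:
  assumes "locally_orth h k N g"
  shows "locally_orth h k N (\<lambda>x. c * g x)"
proof -
  have "inner_prod k ((\<lambda>x. c * g x) \<circ> T) h = c * inner_prod k (g \<circ> T) h" for T
    unfolding inner_prod_def by (simp add: sum_distrib_left mult.assoc)
  thus ?thesis using assms unfolding locally_orth_def by simp
qed

lemma inner_prod_eq_0_if_locally_orth:
  assumes "locally_orth h k k g"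
  shows "inner_prod k g h = 0"
proof -
  define T :: "(nat \<Rightarrow> 'a) \<Rightarrow> nat \<Rightarrow> 'a"
    where "T x = (\<lambda>i. if i < k then (\<Sum>j<k. (if i = j then 1 else 0) * x j) + 0 else 0)" for x
  have T: "T \<in> affine_maps k k" unfolding T_def by (rule affine_mapsI)
  have "T x = x" if "x \<in> vecs k" for x
    using that by (simp add: T_def vecs_def if_distrib[of "\<lambda>v. v * _"] fun_eq_iff not_less cong: if_cong)
  hence "inner_prod k g h = inner_prod k (g \<circ> T) h"
    unfolding inner_prod_def by (intro sum.cong) simp_all
  also have "\<dots> = 0" using assms T unfolding locally_orth_def by blast
  finally show ?thesis .
qed

section \<open>Isolating a monomial\<close>

definition coeff_weight :: "nat \<Rightarrow> 'a::{finite,field} \<Rightarrow> 'a" where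
  "coeff_weight r l = (if r = 0 then (if l = 0 then 1 else 0) else - (l ^ (CARD('a) - 1 - r)))"

lemma sum_coeff_weight_mult_power:
  assumes "r \<le> CARD('a::{finite,field}) - 1" "s \<le> CARD('a) - 1"
  shows "(\<Sum>l::'a\<in>UNIV. coeff_weight r l * l ^ s) = (if s = r then 1 else 0)"
proof (cases "r = 0")
  case True
  thus ?thesis by (simp add: coeff_weight_def if_distrib[of "\<lambda>v. v * _"] cong: if_cong)
next
  case False
  let ?q = "CARD('a) - 1"
  have "(?q - r + s \<noteq> 0 \<and> ?q dvd ?q - r + s) \<longleftrightarrow> s = r"
  proof
    assume dvd: "?q - r + s \<noteq> 0 \<and> ?q dvd ?q - r + s"
    then obtain c where c: "?q - r + s = ?q * c" unfolding dvd_def by blast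
    have "c \<noteq> 0" using c dvd by (intro notI) simp
    have "?q - r + s < ?q * 2" using assms False by linarith
    hence "c < 2" using c(1) by simp
    hence "c = 1" using \<open>c \<noteq> 0\<close> by simp
    thus "s = r" using c(1) assms(1) by simp
  qed (use assms False in simp)
  thus ?thesis
    using False by (simp add: coeff_weight_def sum_negf power_add[symmetric] sum_UNIV_power)
qed

text \<open>By \<open>sum_coeff_weight_mult_power\<close>, averaging \<open>g\<close> over the rescalings \<open>x\<^sub>i \<mapsto> l x\<^sub>i\<close>
  against these weights keeps exactly the monomials with exponent \<open>r\<close> in \<open>x\<^sub>i\<close>.\<close>
definition isolate_exp :: "nat \<Rightarrow> nat \<Rightarrow> ((nat \<Rightarrow> 'a::{finite,field}) \<Rightarrow> 'a) \<Rightarrow> (nat \<Rightarrow> 'a) \<Rightarrow> 'a"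
  where "isolate_exp i r g x = (\<Sum>l\<in>UNIV. coeff_weight r l * g (x(i := l * x i)))"

lemma locally_orth_isolate_exp:
  assumes "locally_orth h k N g" "i < N"
  shows "locally_orth h k N (isolate_exp i r g)"
  unfolding isolate_exp_def
proof (intro locally_orth_sum locally_orth_cmult)
  fix l :: 'a
  show "locally_orth h k N (\<lambda>x. g (x(i := l * x i)))"
    by (rule locally_orth_subst[OF assms(1),
          where A = "\<lambda>j m. if m = j then (if j = i then l else 1) else 0" and b = "\<lambda>_. 0"])
      (use assms(2) in \<open>auto simp: vecs_def fun_eq_iff if_distrib[of "\<lambda>v. v * _"] cong: if_cong\<close>)
qed

lemma monom_scale_var:
  assumes "i < N"
  shows "monom N e (x(i := l * x i)) = l ^ e i * monom N e x"
proof -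
  have "monom N e (x(i := l * x i)) = (\<Prod>j<N. (if j = i then l ^ e i else 1) * x j ^ e j)"
    unfolding monom_def by (intro prod.cong) (auto simp: power_mult_distrib)
  also have "\<dots> = l ^ e i * monom N e x"
    using assms by (simp add: monom_def prod.distrib prod.delta)
  finally show ?thesis .
qed

lemma isolate_exp_monom:
  assumes "i < N" "e i \<le> CARD('a) - 1" "r \<le> CARD('a) - 1"
  shows "isolate_exp i r (monom N e) x = (if e i = r then monom N e x else (0::'a::{finite,field}))"
proof -
  have "isolate_exp i r (monom N e) x = (\<Sum>l\<in>UNIV. coeff_weight r l * l ^ e i) * monom N e x"
    unfolding isolate_exp_def monom_scale_var[OF assms(1)] by (simp add: sum_distrib_right mult.assoc)
  thus ?thesis using sum_coeff_weight_mult_power[OF assms(3,2)] by simp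
qed

lemma isolate_exp_sum:
  "isolate_exp i r (\<lambda>x. \<Sum>e\<in>E. c e * g e x) x = (\<Sum>e\<in>E. c e * isolate_exp i r (g e) x)"
  unfolding isolate_exp_def by (simp add: sum_distrib_left sum.swap[of _ E] mult.left_commute)

lemma isolate_exp_cong:
  assumes "\<And>x. x \<in> vecs N \<Longrightarrow> g x = g' x" "i < N" "x \<in> vecs N"
  shows "isolate_exp i r g x = isolate_exp i r g' x"
proof -
  have "x(i := v) \<in> vecs N" for v using assms(2,3) by (simp add: vecs_def)
  thus ?thesis unfolding isolate_exp_def by (simp add: assms(1))
qed

primrec isolate_monom ::
  "(nat \<Rightarrow> nat) \<Rightarrow> nat \<Rightarrow> ((nat \<Rightarrow> 'a::{finite,field}) \<Rightarrow> 'a) \<Rightarrow> (nat \<Rightarrow> 'a) \<Rightarrow> 'a" where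
  "isolate_monom m 0 g = g"
| "isolate_monom m (Suc i) g = isolate_exp i (m i) (isolate_monom m i g)"

lemma locally_orth_isolate_monom:
  "locally_orth h k N g \<Longrightarrow> j \<le> N \<Longrightarrow> locally_orth h k N (isolate_monom m j g)"
  by (induction j) (simp_all add: locally_orth_isolate_exp)

lemma isolate_monom_cong:
  assumes "\<And>x. x \<in> vecs N \<Longrightarrow> g x = g' x"
  shows "j \<le> N \<Longrightarrow> x \<in> vecs N \<Longrightarrow> isolate_monom m j g x = isolate_monom m j g' x"
proof (induction j arbitrary: x)
  case (Suc j)
  have "isolate_exp j (m j) (isolate_monom m j g) x = isolate_exp j (m j) (isolate_monom m j g') x"
    by (rule isolate_exp_cong[where N=N]) (use Suc in auto)
  thus ?case by simp
qed (simp add: assms)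

lemma isolate_monom_reduced_poly:
  fixes x :: "nat \<Rightarrow> 'a::{finite,field}"
  assumes "m \<in> exps TYPE('a) N" "E \<subseteq> exps TYPE('a) N"
  shows "j \<le> N \<Longrightarrow> x \<in> vecs N \<Longrightarrow> isolate_monom m j (\<lambda>x. \<Sum>e\<in>E. c e * monom N e x) x
      = (\<Sum>e\<in>{e\<in>E. \<forall>i<j. e i = m i}. c e * monom N e x)"
proof (induction j arbitrary: x)
  case (Suc j)
  let ?E = "{e\<in>E. \<forall>i<j. e i = m i}"
  have "isolate_monom m (Suc j) (\<lambda>x. \<Sum>e\<in>E. c e * monom N e x) x
      = isolate_exp j (m j) (\<lambda>x. \<Sum>e\<in>?E. c e * monom N e x) x"
    unfolding isolate_monom.simps by (rule isolate_exp_cong[where N=N]) (use Suc in auto)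
  also have "\<dots> = (\<Sum>e\<in>?E. if e j = m j then c e * monom N e x else 0)"
    unfolding isolate_exp_sum
  proof (rule sum.cong[OF refl])
    fix e assume "e \<in> ?E"
    hence "e j \<le> CARD('a) - 1" "m j \<le> CARD('a) - 1"
      using assms Suc.prems(1) by (auto simp: exps_def less_Suc_eq_le[symmetric])
    thus "c e * isolate_exp j (m j) (monom N e) x = (if e j = m j then c e * monom N e x else 0)"
      using Suc.prems(1) by (simp add: isolate_exp_monom)
  qed
  also have "\<dots> = (\<Sum>e\<in>{e\<in>E. \<forall>i<Suc j. e i = m i}. c e * monom N e x)"
  proof -
    have "finite ?E" using finite_subset[OF assms(2) finite_exps] by simp
    moreover have "{e\<in>E. \<forall>i<Suc j. e i = m i} = {e\<in>?E. e j = m j}" by (auto simp: less_Suc_eq)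
    ultimately show ?thesis by (simp only: sum.inter_filter)
  qed
  finally show ?case .
qed simp

lemma isolate_monom_full:
  fixes x :: "nat \<Rightarrow> 'a::{finite,field}"
  assumes "m \<in> exps TYPE('a) N" "x \<in> vecs N"
  shows "isolate_monom m N (\<lambda>x. \<Sum>e\<in>exps TYPE('a) N. c e * monom N e x) x = c m * monom N m x"
proof -
  have "{e\<in>exps TYPE('a) N. \<forall>i<N. e i = m i} = {m}"
    using assms(1) by (auto simp: exps_def fun_eq_iff) (metis not_le)
  thus ?thesis using isolate_monom_reduced_poly[OF assms(1) order_refl order_refl assms(2)] by simp
qed

lemma reduced_poly_coeffs_unique:
  fixes c c' :: "(nat \<Rightarrow> nat) \<Rightarrow> 'a::{finite,field}"
  assumes "\<And>x. x \<in> vecs N \<Longrightarrow>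
      (\<Sum>e\<in>exps TYPE('a) N. c e * monom N e x) = (\<Sum>e\<in>exps TYPE('a) N. c' e * monom N e x)"
    and m: "m \<in> exps TYPE('a) N"
  shows "c m = c' m"
proof -
  define one :: "nat \<Rightarrow> 'a" where "one i = (if i < N then 1 else 0)" for i
  have one: "one \<in> vecs N" "monom N m one = 1" by (simp_all add: one_def vecs_def monom_def)
  have "c m = isolate_monom m N (\<lambda>x. \<Sum>e\<in>exps TYPE('a) N. c e * monom N e x) one"
    by (simp add: isolate_monom_full[OF m one(1)] one(2))
  also have "\<dots> = isolate_monom m N (\<lambda>x. \<Sum>e\<in>exps TYPE('a) N. c' e * monom N e x) one"
    by (rule isolate_monom_cong[OF assms(1) order_refl one(1)])
  also have "\<dots> = c' m"
    by (simp add: isolate_monom_full[OF m one(1)] one(2))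
  finally show ?thesis .
qed

text \<open>The coefficient map is injective between two sets of the same cardinality
  \<open>q ^ q ^ N\<close>.\<close>
lemma exists_reduced_poly:
  fixes f :: "(nat \<Rightarrow> 'a::{finite,field}) \<Rightarrow> 'a"
  obtains c where "\<And>x. x \<in> vecs N \<Longrightarrow> f x = (\<Sum>e\<in>exps TYPE('a) N. c e * monom N e x)"
proof -
  define Coeffs where "Coeffs = PiE (exps TYPE('a) N) (\<lambda>_. UNIV :: 'a set)"
  define Funs where "Funs = PiE (vecs N :: (nat \<Rightarrow> 'a) set) (\<lambda>_. UNIV :: 'a set)"
  define \<Phi> :: "((nat \<Rightarrow> nat) \<Rightarrow> 'a) \<Rightarrow> (nat \<Rightarrow> 'a) \<Rightarrow> 'a"
    where "\<Phi> c = restrict (\<lambda>x. \<Sum>e\<in>exps TYPE('a) N. c e * monom N e x) (vecs N)" for c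
  have inj: "inj_on \<Phi> Coeffs"
  proof (rule inj_onI)
    fix c c' assume cc: "c \<in> Coeffs" "c' \<in> Coeffs" and eq: "\<Phi> c = \<Phi> c'"
    have "(\<Sum>e\<in>exps TYPE('a) N. c e * monom N e x) = (\<Sum>e\<in>exps TYPE('a) N. c' e * monom N e x)"
      if "x \<in> vecs N" for x
      using fun_cong[OF eq, of x] that by (simp add: \<Phi>_def)
    hence "c m = c' m" if "m \<in> exps TYPE('a) N" for m
      using that by (rule reduced_poly_coeffs_unique)
    thus "c = c'" using cc unfolding Coeffs_def by (intro PiE_ext) simp_all
  qed
  have "\<Phi> ` Coeffs = Funs"
  proof (rule card_subset_eq)
    show "finite Funs" by (simp add: Funs_def finite_vecs finite_PiE)
    show "\<Phi> ` Coeffs \<subseteq> Funs" unfolding \<Phi>_def Funs_def by auto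
    have "card (\<Phi> ` Coeffs) = card Coeffs" by (rule card_image[OF inj])
    also have "\<dots> = card Funs"
      by (simp add: Coeffs_def Funs_def card_PiE finite_exps finite_vecs card_exps card_vecs)
    finally show "card (\<Phi> ` Coeffs) = card Funs" .
  qed
  moreover have "restrict f (vecs N) \<in> Funs" by (simp add: Funs_def)
  ultimately obtain c where c: "\<Phi> c = restrict f (vecs N)" by (metis imageE)
  show ?thesis
  proof (rule that)
    fix x :: "nat \<Rightarrow> 'a" assume "x \<in> vecs N"
    thus "f x = (\<Sum>e\<in>exps TYPE('a) N. c e * monom N e x)"
      using fun_cong[OF c, of x] by (simp add: \<Phi>_def)
  qed
qed

lemma reduced_poly_high_coeff:
  fixes f :: "(nat \<Rightarrow> 'a::{finite,field}) \<Rightarrow> 'a"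
  assumes E: "E \<subseteq> exps TYPE('a) N"
    and f: "\<And>x. x \<in> vecs N \<Longrightarrow> f x = (\<Sum>e\<in>E. c e * monom N e x)"
    and "\<not> deg_le N f D"
  obtains m where "m \<in> E" "D < int (\<Sum>i<N. m i)" "c m \<noteq> 0"
proof -
  let ?low = "{e\<in>exps TYPE('a) N. int (\<Sum>i<N. e i) \<le> D}"
  have "deg_le N f D" if low: "\<And>m. m \<in> E \<Longrightarrow> c m \<noteq> 0 \<Longrightarrow> int (\<Sum>i<N. m i) \<le> D"
  proof -
    have "f x = (\<Sum>e\<in>?low. (if e \<in> E then c e else 0) * monom N e x)" if "x \<in> vecs N" for x
    proof -
      have "(\<Sum>e\<in>?low. (if e \<in> E then c e else 0) * monom N e x) = (\<Sum>e\<in>?low \<inter> E. c e * monom N e x)"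
        by (simp add: sum.inter_restrict finite_exps if_distrib[of "\<lambda>v. v * _"] cong: if_cong)
      also have "\<dots> = (\<Sum>e\<in>E. c e * monom N e x)"
      proof (rule sum.mono_neutral_left)
        show "finite E" using finite_subset[OF E finite_exps] .
        show "\<forall>e\<in>E - ?low \<inter> E. c e * monom N e x = 0"
          using E low by fastforce
      qed simp
      finally show ?thesis using f that by simp
    qed
    thus ?thesis unfolding deg_le_def by (intro exI ballI)
  qed
  then obtain m where "m \<in> E" "c m \<noteq> 0" "\<not> int (\<Sum>i<N. m i) \<le> D"
    using assms(3) by blast
  thus ?thesis using that by (simp add: not_le)
qed

lemma locally_orth_monom:
  fixes f :: "(nat \<Rightarrow> 'a::{finite,field}) \<Rightarrow> 'a"
  assumes "locally_orth h k N f"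
    and f: "\<And>x. x \<in> vecs N \<Longrightarrow> f x = (\<Sum>e\<in>exps TYPE('a) N. c e * monom N e x)"
    and m: "m \<in> exps TYPE('a) N" "c m \<noteq> 0"
  shows "locally_orth h k N (monom N m)"
proof -
  have "locally_orth h k N (\<lambda>x. inverse (c m) * isolate_monom m N f x)"
    using assms(1) by (intro locally_orth_cmult locally_orth_isolate_monom) simp_all
  thus ?thesis
    by (rule locally_orth_cong) (simp add: isolate_monom_cong[OF f] isolate_monom_full m)
qed

section \<open>Reshaping monomials\<close>

lemma sum_coeff_weight_1_binomial:
  assumes "1 \<le> t" "t \<le> CARD('a) - 1"
  shows "(\<Sum>l\<in>UNIV. coeff_weight 1 l * (u + l * v) ^ t) = of_nat t * u ^ (t - 1) * (v :: 'a::{finite,field})"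
proof -
  have "(\<Sum>l\<in>UNIV. coeff_weight 1 l * (u + l * v) ^ t)
      = (\<Sum>s\<le>t. of_nat (t choose s) * v ^ s * u ^ (t - s) * (\<Sum>l\<in>UNIV. coeff_weight 1 l * l ^ s))"
    by (simp add: add.commute[of u] binomial_ring sum_distrib_left sum_distrib_right
        sum.swap[of _ "{..t}"] power_mult_distrib mult_ac)
  also have "\<dots> = (\<Sum>s\<le>t. if s = 1 then of_nat (t choose s) * v ^ s * u ^ (t - s) else 0)"
    using assms card_field_ge_2[where 'a='a]
    by (intro sum.cong refl) (simp add: sum_coeff_weight_mult_power)
  also have "\<dots> = of_nat t * u ^ (t - 1) * v" using assms(1) by simp
  finally show ?thesis .
qed

lemma monom_remove_var:
  "j < N \<Longrightarrow> monom N m x = x j ^ m j * (\<Prod>i\<in>{..<N} - {j}. x i ^ m i)"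
  unfolding monom_def by (simp add: prod.remove)

text \<open>Substituting \<open>x\<^sub>j + l x\<^sub>N\<close> for \<open>x\<^sub>j\<close> and extracting the coefficient of \<open>l\<close>
  produces \<open>m\<^sub>j x\<^sub>j\<^bsup>m\<^sub>j - 1\<^esup> x\<^sub>N\<close>.\<close>
lemma sum_coeff_weight_1_shear_monom:
  fixes m :: "nat \<Rightarrow> nat" and x :: "nat \<Rightarrow> 'a::{finite,field}"
  assumes j: "j < N" and mj: "1 \<le> m j" "m j \<le> CARD('a) - 1"
  shows "(\<Sum>l\<in>UNIV. coeff_weight 1 l *
      monom N m (\<lambda>i. if i < N then x i + (if i = j then l * x N else 0) else 0))
    = of_nat (m j) * monom (Suc N) (m(j := m j - 1, N := 1)) x"
proof -
  define R where "R = (\<Prod>i\<in>{..<N} - {j}. x i ^ m i)"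
  have "(\<Prod>i\<in>{..<N} - {j}. (if i < N then x i + (if i = j then l * x N else 0) else 0) ^ m i) = R"
    for l unfolding R_def by (intro prod.cong) auto
  hence "(\<Sum>l\<in>UNIV. coeff_weight 1 l *
      monom N m (\<lambda>i. if i < N then x i + (if i = j then l * x N else 0) else 0))
    = (\<Sum>l\<in>UNIV. coeff_weight 1 l * (x j + l * x N) ^ m j) * R"
    using j by (simp add: monom_remove_var[OF j] sum_distrib_right mult.assoc)
  also have "\<dots> = of_nat (m j) * (x j ^ (m j - 1) * R * x N)"
    unfolding sum_coeff_weight_1_binomial[OF mj] by (simp only: mult_ac)
  also have "x j ^ (m j - 1) * R = monom N (m(j := m j - 1, N := 1)) x"
  proof -
    have "(\<Prod>i\<in>{..<N} - {j}. x i ^ (m(j := m j - 1, N := 1)) i) = R"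
      unfolding R_def by (intro prod.cong) auto
    thus ?thesis using j by (simp add: monom_remove_var[OF j])
  qed
  also have "monom N (m(j := m j - 1, N := 1)) x * x N = monom (Suc N) (m(j := m j - 1, N := 1)) x"
    by (simp add: monom_def prod.lessThan_Suc)
  finally show ?thesis .
qed

lemma locally_orth_split_var:
  fixes m :: "nat \<Rightarrow> nat"
  assumes "locally_orth h k N (monom N m :: (nat \<Rightarrow> 'a::{finite,field}) \<Rightarrow> 'a)"
    and j: "j < N" and mj: "1 \<le> m j" "m j \<le> CARD('a) - 1" "of_nat (m j) \<noteq> (0::'a)"
  shows "locally_orth h k (Suc N) (monom (Suc N) (m(j := m j - 1, N := 1)) :: (nat \<Rightarrow> 'a) \<Rightarrow> 'a)"
proof -
  have "locally_orth h k (Suc N)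
      (\<lambda>x. monom N m (\<lambda>i. if i < N then x i + (if i = j then l * x N else 0) else 0))" for l
    by (rule locally_orth_subst[OF assms(1), where
          A = "\<lambda>i q. (if q = i then 1 else 0) + (if i = j \<and> q = N then l else 0)" and b = "\<lambda>_. 0"])
      (auto simp: fun_eq_iff distrib_right sum.distrib if_distrib[of "\<lambda>v. v * _"] cong: if_cong)
  hence "locally_orth h k (Suc N) (\<lambda>x. inverse (of_nat (m j)) * (\<Sum>l\<in>UNIV. coeff_weight 1 l *
      monom N m (\<lambda>i. if i < N then x i + (if i = j then l * x N else 0) else 0)))"
    by (intro locally_orth_cmult locally_orth_sum)
  thus ?thesis
    unfolding sum_coeff_weight_1_shear_monom[where m=m, OF j mj(1,2)]
    using mj(3) by (simp add: mult.assoc[symmetric])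
qed

lemma sum_fun_upd_add:
  fixes f :: "'a \<Rightarrow> 'b::comm_monoid_add"
  assumes "finite A" "j \<in> A"
  shows "sum (f(j := v)) A + f j = sum f A + v"
proof -
  have "sum (f(j := v)) (A - {j}) = sum f (A - {j})" by (intro sum.cong) auto
  thus ?thesis using assms by (simp add: sum.remove add_ac)
qed

lemma sum_lessThan_Suc_fun_upd:
  "(\<Sum>i<Suc N. (f(N := v)) i) = (\<Sum>i<N. f i) + (v :: 'a::comm_monoid_add)"
proof -
  have "(\<Sum>i<N. (f(N := v)) i) = (\<Sum>i<N. f i)" by (intro sum.cong) auto
  thus ?thesis by simp
qed

lemma locally_orth_squarefree:
  fixes m :: "nat \<Rightarrow> nat"
  assumes "prime CARD('a::{finite,field})"
  shows "locally_orth h k N (monom N m :: (nat \<Rightarrow> 'a) \<Rightarrow> 'a) \<Longrightarrow> \<forall>i<N. m i \<le> CARD('a) - 1 \<Longrightarrow>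
    \<exists>N' u. locally_orth h k N' (monom N' u :: (nat \<Rightarrow> 'a) \<Rightarrow> 'a) \<and> (\<forall>i<N'. u i \<le> 1)
      \<and> (\<Sum>i<N'. u i) = (\<Sum>i<N. m i)"
proof (induction "\<Sum>i<N. m i - 1" arbitrary: N m rule: less_induct)
  case less
  show ?case
  proof (cases "\<forall>i<N. m i \<le> 1")
    case True
    thus ?thesis using less.prems by blast
  next
    case False
    then obtain j where j: "j < N" "2 \<le> m j" by (auto simp: not_le)
    define m' where "m' = m(j := m j - 1, N := 1)"
    have "locally_orth h k (Suc N) (monom (Suc N) m' :: (nat \<Rightarrow> 'a) \<Rightarrow> 'a)"
      unfolding m'_def using j less.prems(2)
      by (intro locally_orth_split_var[OF less.prems(1) j(1)] of_nat_neq_0_less_card[OF assms]) auto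
    moreover have "\<forall>i<Suc N. m' i \<le> CARD('a) - 1"
      using less.prems(2) card_field_ge_2[where 'a='a] by (auto simp: m'_def less_Suc_eq)
    moreover have "(\<Sum>i<Suc N. m' i - 1) < (\<Sum>i<N. m i - 1)"
    proof -
      have "(\<Sum>i<Suc N. m' i - 1) = (\<Sum>i<Suc N. (((\<lambda>i. m i - 1)(j := m j - 2))(N := 0)) i)"
        using j by (intro sum.cong) (auto simp: m'_def)
      hence "(\<Sum>i<Suc N. m' i - 1) = (\<Sum>i<N. ((\<lambda>i. m i - 1)(j := m j - 2)) i)"
        unfolding sum_lessThan_Suc_fun_upd by simp
      thus ?thesis
        using sum_fun_upd_add[of "{..<N}" j "\<lambda>i. m i - 1" "m j - 2"] j by simp
    qed
    moreover have "(\<Sum>i<Suc N. m' i) = (\<Sum>i<N. m i)"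
      using sum_fun_upd_add[of "{..<N}" j m "m j - 1"] j
      by (simp add: m'_def sum_lessThan_Suc_fun_upd)
    ultimately show ?thesis using less.hyps by metis
  qed
qed

lemma exists_map_with_fibre_cards:
  fixes b :: "nat \<Rightarrow> nat"
  assumes "finite S" "(\<Sum>i<K. b i) \<le> card S"
  obtains P \<psi> where "P \<subseteq> S" "\<And>l. l \<in> P \<Longrightarrow> \<psi> l < K" "\<And>i. i < K \<Longrightarrow> card {l\<in>P. \<psi> l = i} = b i"
proof -
  define B where "B = (SIGMA i:{..<K}. {..<b i})"
  obtain P where P: "P \<subseteq> S" "card P = card B"
    using assms by (auto simp: B_def card_SigmaI intro: obtain_subset_with_card_n)
  have "finite P" using P(1) assms(1) finite_subset by blast
  moreover have "finite B" by (simp add: B_def)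
  ultimately obtain \<beta> where \<beta>: "bij_betw \<beta> P B" using P(2) finite_same_card_bij by blast
  show ?thesis
  proof (rule that[OF P(1), of "fst \<circ> \<beta>"])
    show "(fst \<circ> \<beta>) l < K" if "l \<in> P" for l
      using bij_betwE[OF \<beta>] that by (auto simp: B_def)
    show "card {l\<in>P. (fst \<circ> \<beta>) l = i} = b i" if "i < K" for i
    proof -
      have "\<beta> ` {l\<in>P. fst (\<beta> l) = i} = {p \<in> \<beta> ` P. fst p = i}" by auto
      also have "\<dots> = {i} \<times> {..<b i}"
        using \<beta> that by (auto simp: B_def bij_betw_def)
      finally have img: "\<beta> ` {l\<in>P. fst (\<beta> l) = i} = {i} \<times> {..<b i}" .
      have "inj_on \<beta> {l\<in>P. fst (\<beta> l) = i}"
        using \<beta> unfolding bij_betw_def by (rule inj_on_subset[OF conjunct1]) auto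
      hence "card {l\<in>P. fst (\<beta> l) = i} = card ({i} \<times> {..<b i})"
        by (simp flip: img add: card_image)
      thus ?thesis by (simp add: card_cartesian_product_singleton)
    qed
  qed
qed

text \<open>Each variable of the squarefree monomial is sent either to some \<open>y (\<psi> l)\<close> or to \<open>1\<close>,
  so that exactly \<open>b\<^sub>i\<close> of them land on \<open>y\<^sub>i\<close>.\<close>
lemma locally_orth_merge:
  fixes u b :: "nat \<Rightarrow> nat"
  assumes "locally_orth h k N (monom N u :: (nat \<Rightarrow> 'a::{finite,field}) \<Rightarrow> 'a)"
    and u: "\<forall>i<N. u i \<le> 1" and "(\<Sum>i<K. b i) \<le> (\<Sum>i<N. u i)"
  shows "locally_orth h k K (monom K b :: (nat \<Rightarrow> 'a) \<Rightarrow> 'a)"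
proof -
  define S where "S = {l. l < N \<and> u l = 1}"
  have "(\<Sum>i<N. u i) = (\<Sum>i\<in>S. 1)"
    using u by (intro sum.mono_neutral_cong_right) (auto simp: S_def le_Suc_eq)
  hence "(\<Sum>i<K. b i) \<le> card S" using assms(3) by simp
  moreover have "finite S" by (simp add: S_def)
  ultimately obtain P \<psi> where
    P: "P \<subseteq> S" "\<And>l. l \<in> P \<Longrightarrow> \<psi> l < K" "\<And>i. i < K \<Longrightarrow> card {l\<in>P. \<psi> l = i} = b i"
    using exists_map_with_fibre_cards[where S=S and K=K and b=b] by blast
  define \<sigma> :: "(nat \<Rightarrow> 'a) \<Rightarrow> nat \<Rightarrow> 'a"
    where "\<sigma> y l = (if l < N then (if l \<in> P then y (\<psi> l) else 1) else 0)" for y l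
  have "locally_orth h k K (\<lambda>y. monom N u (\<sigma> y))"
  proof (rule locally_orth_subst[OF assms(1),
        where A = "\<lambda>l i. if l \<in> P \<and> \<psi> l = i then 1 else 0" and b = "\<lambda>l. if l \<in> P then 0 else 1"])
    fix y :: "nat \<Rightarrow> 'a"
    have "(\<Sum>i<K. (if l \<in> P \<and> \<psi> l = i then 1 else 0) * y i) = (if l \<in> P then y (\<psi> l) else 0)" for l
      using P(2) by (auto simp: if_distrib[of "\<lambda>v. v * _"] sum.delta cong: if_cong)
    thus "\<sigma> y = (\<lambda>l. if l < N then (\<Sum>i<K. (if l \<in> P \<and> \<psi> l = i then 1 else 0) * y i)
        + (if l \<in> P then 0 else 1) else 0)"
      by (simp add: \<sigma>_def fun_eq_iff)
  qed
  moreover have "monom N u (\<sigma> y) = monom K b y" for y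
  proof -
    have "monom N u (\<sigma> y) = (\<Prod>l<N. if l \<in> P then y (\<psi> l) else 1)"
      unfolding monom_def using P(1) by (intro prod.cong) (auto simp: \<sigma>_def S_def)
    also have "\<dots> = (\<Prod>l\<in>P. y (\<psi> l))"
      using P(1) by (intro prod.mono_neutral_cong_right) (auto simp: S_def)
    also have "\<dots> = (\<Prod>i<K. \<Prod>l\<in>{l\<in>P. \<psi> l = i}. y (\<psi> l))"
      using P(1,2) finite_subset[of P "{..<N}"] by (intro prod.group[symmetric]) (auto simp: S_def)
    also have "\<dots> = (\<Prod>i<K. y i ^ b i)"
      using P(3) by (intro prod.cong) simp_all
    finally show ?thesis by (simp add: monom_def)
  qed
  ultimately show ?thesis by simp
qed

lemma exps_ex_less_if_sum_le:
  assumes a: "a \<in> exps TYPE('a::finite) k" and e: "e \<in> exps TYPE('a) k"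
    and "(\<Sum>i<k. e i) \<le> (\<Sum>i<k. a i)" "e \<noteq> a"
  shows "\<exists>i<k. e i < a i"
proof (rule ccontr)
  assume "\<not> ?thesis"
  hence le: "a i \<le> e i" if "i < k" for i using that not_less by blast
  have eq: "a i = e i" if "i < k" for i
  proof (rule ccontr)
    assume "a i \<noteq> e i"
    hence "\<exists>j\<in>{..<k}. a j < e j" using le[OF that] that by (auto intro!: bexI[of _ i])
    hence "(\<Sum>i<k. a i) < (\<Sum>i<k. e i)" using le by (intro sum_strict_mono_ex1) auto
    thus False using assms(3) by simp
  qed
  have "e = a"
  proof
    fix i
    show "e i = a i" using eq[of i] a e by (cases "i < k") (simp_all add: exps_def)
  qed
  thus False using assms(4) by simp
qed

lemma sum_monom_mult_complement:
  fixes a e :: "nat \<Rightarrow> nat"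
  assumes a: "a \<in> exps TYPE('a::{finite,field}) k" and e: "e \<in> exps TYPE('a) k"
    and "(\<Sum>i<k. e i) \<le> (\<Sum>i<k. a i)"
  shows "(\<Sum>x\<in>vecs k. monom k (\<lambda>i. CARD('a) - 1 - a i) x * monom k e (x :: nat \<Rightarrow> 'a))
      = (if e = a then (-1) ^ k else 0)"
proof -
  have sum_eq: "(\<Sum>x\<in>vecs k. monom k (\<lambda>i. CARD('a) - 1 - a i) x * monom k e (x :: nat \<Rightarrow> 'a))
      = (\<Prod>i<k. \<Sum>t::'a\<in>UNIV. t ^ (CARD('a) - 1 - a i + e i))"
    by (simp flip: monom_add add: sum_vecs_monom)
  show ?thesis
  proof (cases "e = a")
    case True
    have "(\<Sum>t::'a\<in>UNIV. t ^ (CARD('a) - 1 - a i + e i)) = -1" if "i < k" for i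
    proof -
      have "a i < CARD('a)" using a that by (simp add: exps_def)
      hence "CARD('a) - 1 - a i + e i = CARD('a) - 1" unfolding True by linarith
      thus ?thesis using card_field_ge_2[where 'a='a] by (simp add: sum_UNIV_power)
    qed
    thus ?thesis unfolding sum_eq using True by simp
  next
    case False
    obtain i where i: "i < k" "e i < a i"
      using exps_ex_less_if_sum_le[OF a e assms(3) False] by blast
    have "a i < CARD('a)" using a i(1) by (simp add: exps_def)
    hence "CARD('a) - 1 - a i + e i < CARD('a) - 1" using i(2) by linarith
    thus ?thesis
      unfolding sum_eq using False i(1) sum_UNIV_power_eq_0 by (auto intro!: prod_zero bexI[of _ i])
  qed
qed

lemma sum_complement_exps:
  assumes "a \<in> exps TYPE('a::finite) k"
  shows "(\<Sum>i<k. CARD('a) - 1 - a i) + (\<Sum>i<k. a i) = k * (CARD('a) - 1)"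
proof -
  have "CARD('a) - 1 - a i + a i = CARD('a) - 1" if "i < k" for i
  proof -
    have "a i < CARD('a)" using assms that by (simp add: exps_def)
    thus ?thesis by linarith
  qed
  thus ?thesis by (simp flip: sum.distrib)
qed

lemma exists_monom_not_orth:
  fixes h :: "(nat \<Rightarrow> 'a::{finite,field}) \<Rightarrow> 'a"
  assumes "has_degree k h (int e)"
  obtains b where "(\<Sum>i<k. b i) + e = k * (CARD('a) - 1)" "inner_prod k (monom k b) h \<noteq> 0"
proof -
  define E where "E = {a\<in>exps TYPE('a) k. int (\<Sum>i<k. a i) \<le> int e}"
  obtain c where c: "\<And>x. x \<in> vecs k \<Longrightarrow> h x = (\<Sum>a\<in>E. c a * monom k a x)"
    using assms unfolding has_degree_def deg_le_def E_def by blast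
  have "E \<subseteq> exps TYPE('a) k" "\<not> deg_le k h (int e - 1)"
    using assms by (auto simp: E_def has_degree_def)
  then obtain a where a: "a \<in> E" "int e - 1 < int (\<Sum>i<k. a i)" "c a \<noteq> 0"
    using reduced_poly_high_coeff[OF _ c] by blast
  have aE: "a \<in> exps TYPE('a) k" "(\<Sum>i<k. a i) = e"
    using a(1,2) by (auto simp: E_def simp flip: of_nat_sum)
  define b where "b i = CARD('a) - 1 - a i" for i
  have "(\<Sum>i<k. b i) + e = k * (CARD('a) - 1)"
    using sum_complement_exps[OF aE(1)] aE(2) by (simp add: b_def)
  moreover have "inner_prod k (monom k b) h = c a * (-1) ^ k"
  proof -
    have "inner_prod k (monom k b) h
        = (\<Sum>a'\<in>E. c a' * (\<Sum>x\<in>vecs k. monom k b x * monom k a' x))"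
      unfolding inner_prod_def
      by (simp add: c sum_distrib_left sum.swap[of _ E] mult_ac cong: sum.cong)
    also have "\<dots> = (\<Sum>a'\<in>E. if a' = a then c a' * (-1) ^ k else 0)"
    proof (intro sum.cong refl)
      fix a' assume "a' \<in> E"
      hence "a' \<in> exps TYPE('a) k" "(\<Sum>i<k. a' i) \<le> (\<Sum>i<k. a i)"
        using aE(2) by (auto simp: E_def simp flip: of_nat_sum)
      from sum_monom_mult_complement[OF aE(1) this]
      show "c a' * (\<Sum>x\<in>vecs k. monom k b x * monom k a' x) = (if a' = a then c a' * (-1) ^ k else 0)"
        unfolding b_def by simp
    qed
    also have "\<dots> = c a * (-1) ^ k"
      using a(1) finite_subset[of E "exps TYPE('a) k"] by (simp add: E_def finite_exps)
    finally show ?thesis .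
  qed
  ultimately show ?thesis using that a(3) by simp
qed

lemma Fchar_subset_RM:
  fixes h :: "(nat \<Rightarrow> 'a::{finite,field}) \<Rightarrow> 'a"
  assumes "prime CARD('a)" "has_degree k h (int e)" "k * (CARD('a) - 1) \<le> d + 1 + e"
  shows "Fchar n k h \<subseteq> RM n d"
proof
  fix f assume f: "f \<in> Fchar n k h"
  have "deg_le n f (int d)"
  proof (rule ccontr)
    assume "\<not> deg_le n f (int d)"
    moreover obtain c where c: "\<And>x. x \<in> vecs n \<Longrightarrow> f x = (\<Sum>e\<in>exps TYPE('a) n. c e * monom n e x)"
      using exists_reduced_poly[where f=f and N=n] by blast
    ultimately obtain m where m: "m \<in> exps TYPE('a) n" "int d < int (\<Sum>i<n. m i)" "c m \<noteq> 0"
      using reduced_poly_high_coeff[OF order_refl c] by blast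
    have "locally_orth h k n (monom n m)"
      using f by (intro locally_orth_monom[OF _ c m(1,3)]) (simp add: Fchar_eq)
    moreover have "\<forall>i<n. m i \<le> CARD('a) - 1" using m(1) by (auto simp: exps_def)
    ultimately obtain N u where
      u: "locally_orth h k N (monom N u)" "\<forall>i<N. u i \<le> 1" "(\<Sum>i<N. u i) = (\<Sum>i<n. m i)"
      using locally_orth_squarefree[OF assms(1)] by blast
    obtain b where b: "(\<Sum>i<k. b i) + e = k * (CARD('a) - 1)" "inner_prod k (monom k b) h \<noteq> 0"
      using assms(2) by (rule exists_monom_not_orth)
    have "(\<Sum>i<k. b i) \<le> (\<Sum>i<N. u i)" using b(1) u(3) m(2) assms(3) by linarith
    hence "locally_orth h k k (monom k b)" by (rule locally_orth_merge[OF u(1,2)])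
    thus False using b(2) inner_prod_eq_0_if_locally_orth by blast
  qed
  thus "f \<in> RM n d" using f by (simp add: Fchar_def RM_def)
qed

theorem lemma3p2:
  fixes h :: "(nat \<Rightarrow> 'a::{finite,field}) \<Rightarrow> 'a"
    and n d k :: nat
  assumes "prime CARD('a)"
    and "n > 0" and "d > 0"
    and "int k \<ge> \<lceil>real (d + 1) / real (CARD('a) - 1)\<rceil>"
    and "has_degree k h (int k * (int CARD('a) - 1) - (int d + 1))"
  shows "RM n d = Fchar n k h"
proof -
  have q: "CARD('a) - 1 > 0" using card_field_ge_2[where 'a='a] by simp
  have "real (d + 1) \<le> real k * real (CARD('a) - 1)"
    using assms(4) q by (simp add: ceiling_le_iff divide_le_eq)
  hence kq: "d + 1 \<le> k * (CARD('a) - 1)" by (simp only: of_nat_mult[symmetric] of_nat_le_iff)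
  define e where "e = k * (CARD('a) - 1) - (d + 1)"
  have "int e = int k * (int CARD('a) - 1) - (int d + 1)"
    using kq q by (simp add: e_def of_nat_diff)
  hence h: "has_degree k h (int e)" using assms(5) by simp
  show ?thesis
  proof
    show "RM n d \<subseteq> Fchar n k h"
      by (rule RM_subset_Fchar[where e=e]) (use h kq in \<open>simp_all add: has_degree_def e_def\<close>)
    show "Fchar n k h \<subseteq> RM n d"
      by (rule Fchar_subset_RM[OF assms(1) h]) (simp add: e_def)
  qed
qed

end
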